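(* Let $q$ be an odd prime power and $\varphi_3$ the coloring defined below (with $d=3$). No set $S\subseteq(\mathbb{F}_q^* )^3$ of $6$ vectors has a leftover structure under $\varphi_3$.
   Context: Let $d=3$. $\mathbb{F}_q^*$ is the set of nonzero elements of $\mathbb{F}_q$, endowed with an arbitrary fixed linear order; $(\mathbb{F}_q^* )^d$ is ordered lexicographically with respect to it. Let $C_d = \mathrm{DOT} \sqcup \mathrm{ZERO}\sqcup\mathrm{UP}\sqcup\mathrm{DOWN}$, where $\mathrm{DOT} = \mathbb{F}_q^*$ and ZERO, UP, DOWN are three disjoint copies of $\{1,\dots,d\}\times \mathbb{F}_q$. For distinct $x<y$ in $(\mathbb{F}_q^* )^d$, let $i$ be the first coordinate where $x$ and $y$ differ, and $x\cdot y$ the standard dot product; $\varphi_d(x,y)=\varphi_d(y,x)$ is $(i,x_i+y_i)$ in ZERO if $x\cdot y=0$; $(i,x_i+y_i)$ in UP if $x\cdot y\ne 0$ and $x\cdot y=x\cdot x$; $(i,x_i+y_i)$ in DOWN if $x\cdot y\notin\{0,x\cdot x\}$ and $x\cdot y=y\cdot y$; and $x\cdot y\in\mathrm{DOT}$ otherwise. For a vertex set $A$, $\varphi_d(A)$ is the set of colors on pairs inside $A$. $S$ has a leftover structure under $\varphi_d$ if $|S|=1$, or $S$ has a partition $S=A\cup B$ into nonempty sets such that $A$ and $B$ each have a leftover structure, $\varphi_d(A)\cap\varphi_d(B)=\emptyset$, and there is a color $\gamma$ with $\varphi_d(a,b)=\gamma$ for all $a\in A$, $b\in B$ and $\gamma\notin\varphi_d(A)\cup\varphi_d(B)$.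 *)

theory Defs
  imports Main
begin

text \<open>Vectors of (F_q^*)^d are lists of length d with nonzero entries (coordinates
  indexed 0..d-1 internally; colors record the 1-based index).\<close>

datatype 'a color = Dot 'a | Zero nat 'a | Up nat 'a | Down nat 'a

definition vecs :: "nat \<Rightarrow> ('a::zero) list set" where
  "vecs d = {x. length x = d \<and> (\<forall>i<length x. x ! i \<noteq> 0)}"

definition dotp :: "('a::comm_semiring_1) list \<Rightarrow> 'a list \<Rightarrow> 'a" where
  "dotp x y = sum_list (map2 (*) x y)"

definition first_diff :: "'a list \<Rightarrow> 'a list \<Rightarrow> nat" where
  "first_diff x y = (LEAST i. i < length x \<and> x ! i \<noteq> y ! i)"

definition lex_less :: "'a rel \<Rightarrow> 'a list \<Rightarrow> 'a list \<Rightarrow> bool" where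
  "lex_less r x y \<longleftrightarrow> (\<exists>i<length x. (\<forall>j<i. x ! j = y ! j) \<and> x ! i \<noteq> y ! i \<and> (x ! i, y ! i) \<in> r)"

definition col :: "('a::comm_ring_1) list \<Rightarrow> 'a list \<Rightarrow> 'a color" where
  "col x y = (let i = first_diff x y; s = x ! i + y ! i; p = dotp x y in
     if p = 0 then Zero (i + 1) s
     else if p = dotp x x then Up (i + 1) s
     else if p = dotp y y then Down (i + 1) s
     else Dot p)"

definition phi :: "'a rel \<Rightarrow> ('a::comm_ring_1) list \<Rightarrow> 'a list \<Rightarrow> 'a color" where
  "phi r x y = (if lex_less r x y then col x y else col y x)"

definition colors :: "'a rel \<Rightarrow> ('a::comm_ring_1) list set \<Rightarrow> 'a color set" where
  "colors r A = {phi r x y | x y. x \<in> A \<and> y \<in> A \<and> x \<noteq> y}"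

inductive leftover :: "'a rel \<Rightarrow> ('a::comm_ring_1) list set \<Rightarrow> bool" for r where
  single: "leftover r {x}"
| split: "\<lbrakk> A \<noteq> {}; B \<noteq> {}; A \<inter> B = {}; leftover r A; leftover r B;
           colors r A \<inter> colors r B = {};
           \<forall>a\<in>A. \<forall>b\<in>B. phi r a b = \<gamma>;
           \<gamma> \<notin> colors r A \<union> colors r B \<rbrakk> \<Longrightarrow> leftover r (A \<union> B)"

end

theory Submission
  imports Defs
begin

(* A leftover structure on six vectors splits off a vertex e joined to the other five in one
   colour, and these five split off a vertex d joined to the remaining four in one colour: a
   split into parts of sizes at least 2 and 3 is impossible.  Every leftover set of at least
   three vectors contains a cherry, a vertex c with phi(c,a) = phi(c,b), and a cherry forces
   a - c and b - c to be linearly independent.  A monochromatic star from a vertex x to a, b, c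
   has either a dot-product colour, so that x is orthogonal to a - c and b - c, or a coordinate
   colour, which must then be that of the first coordinate, so that a, b, c share their first
   coordinate.  For two vertices joined monochromatically to a cherry, and for the nested stars
   of d and e, every combination of these alternatives forces two distinct vectors to coincide
   or a coordinate to vanish. *)

section \<open>Vectors of length three\<close>

lemma length_3_conv: "length x = 3 \<Longrightarrow> x = [x!0, x!1, x!2]"
  by (simp add: list_eq_iff_nth_eq less_Suc_eq numeral_eq_Suc nth_Cons')

lemma list_3_eqI:
  "\<lbrakk>length x = 3; length y = 3; x!0 = y!0; x!1 = y!1; x!2 = y!2\<rbrakk> \<Longrightarrow> x = y"
  by (metis length_3_conv)

lemma vecsD:
  assumes "x \<in> vecs d"
  shows vecs_length: "length x = d" and vecs_nth_nonzero: "i < d \<Longrightarrow> x!i \<noteq> 0"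
  using assms by (auto simp: vecs_def)

lemma dotp_commute: "dotp x y = dotp y x"
  unfolding dotp_def by (subst zip_commute) (simp add: comp_def mult.commute split_def)

lemma dotp_3:
  "length x = 3 \<Longrightarrow> length y = 3 \<Longrightarrow> dotp x y = x!0 * y!0 + x!1 * y!1 + x!2 * y!2"
  by (subst (1 2) length_3_conv) (simp_all add: dotp_def add.assoc)

definition vdiff :: "'a::ab_group_add list \<Rightarrow> 'a list \<Rightarrow> 'a list" where
  "vdiff x y = map2 (-) x y"

lemma length_vdiff [simp]: "length (vdiff x y) = min (length x) (length y)"
  by (simp add: vdiff_def)

lemma nth_vdiff [simp]: "i < length x \<Longrightarrow> i < length y \<Longrightarrow> vdiff x y ! i = x!i - y!i"
  by (simp add: vdiff_def)

lemma dotp_vdiff: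
  fixes x y z :: "'a::comm_ring_1 list"
  assumes "length x = 3" "length y = 3" "length z = 3"
  shows dotp_vdiff_left: "dotp (vdiff x y) z = dotp x z - dotp y z"
    and dotp_vdiff_right: "dotp z (vdiff x y) = dotp z x - dotp z y"
  using assms by (simp_all add: dotp_3 algebra_simps)

lemma dotp_vdiff_eq_0_iff:
  fixes x y z :: "'a::comm_ring_1 list"
  shows "length x = 3 \<Longrightarrow> length y = 3 \<Longrightarrow> length z = 3 \<Longrightarrow>
    dotp z (vdiff x y) = 0 \<longleftrightarrow> dotp z x = dotp z y"
  by (simp add: dotp_vdiff_right)

lemma vdiff_right_cancel:
  assumes "length x = length z" "length y = length z" "vdiff x z = vdiff y z"
  shows "x = y"
proof (rule nth_equalityI)
  fix i assume "i < length x"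
  then have "x!i - z!i = y!i - z!i" using assms by (metis nth_vdiff)
  then show "x!i = y!i" by simp
qed (use assms in simp)

definition parallel :: "'a::comm_ring list \<Rightarrow> 'a list \<Rightarrow> bool" where
  "parallel u v \<longleftrightarrow> u!1 * v!2 = u!2 * v!1 \<and> u!2 * v!0 = u!0 * v!2 \<and> u!0 * v!1 = u!1 * v!0"

lemma parallel_eq_if_dotp_eq:
  fixes u v w :: "'a::field list"
  assumes "length u = 3" "length v = 3" "length w = 3"
    and "parallel u v" "dotp w u = dotp w v" "dotp w u \<noteq> 0"
  shows "u = v"
proof -
  have "u!0 = v!0 \<and> u!1 = v!1 \<and> u!2 = v!2"
    using assms(4-6) unfolding parallel_def dotp_3[OF assms(3,1)] dotp_3[OF assms(3,2)] by algebra
  then show ?thesis using assms(1,2) by (simp add: list_3_eqI)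
qed

lemma parallel_eq_if_nth_eq:
  fixes u v :: "'a::field list"
  assumes "length u = 3" "length v = 3" "parallel u v" "i < 3" "u!i = v!i" "u!i \<noteq> 0"
  shows "u = v"
proof -
  have "u!0 = v!0 \<and> u!1 = v!1 \<and> u!2 = v!2"
    using assms(3-6) unfolding parallel_def
    by (auto simp: less_Suc_eq numeral_eq_Suc mult.commute[of "u!i"])
  then show ?thesis using assms(1,2) by (simp add: list_3_eqI)
qed

lemma orthogonal_to_nonparallel_parallel:
  fixes u v x y :: "'a::field list"
  assumes "length u = 3" "length v = 3" "length x = 3" "length y = 3" "\<not> parallel u v"
    and "dotp x u = 0" "dotp x v = 0" "dotp y u = 0" "dotp y v = 0"
  shows "parallel x y"
  using assms(5-) unfolding parallel_def dotp_3[OF assms(3,1)] dotp_3[OF assms(3,2)]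
    dotp_3[OF assms(4,1)] dotp_3[OF assms(4,2)] by algebra

lemma orthogonal_to_nonparallel_first_coord_zero:
  fixes u v x :: "'a::field list"
  assumes "length u = 3" "length v = 3" "length x = 3" "\<not> parallel u v"
    and "u!0 = 0" "v!0 = 0" "dotp x u = 0" "dotp x v = 0"
  shows "x!1 = 0 \<and> x!2 = 0"
proof -
  have "u!1 * v!2 \<noteq> u!2 * v!1" using assms(4-6) by (simp add: parallel_def)
  then show ?thesis
    using assms(5-) unfolding dotp_3[OF assms(3,1)] dotp_3[OF assms(3,2)] by algebra
qed

lemma parallel_orthogonal:
  fixes x y w :: "'a::field list"
  assumes "length x = 3" "length y = 3" "length w = 3"
    and "parallel x y" "y!0 \<noteq> 0" "dotp y w = 0"
  shows "dotp x w = 0"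
  using assms(4-) unfolding parallel_def dotp_3[OF assms(1,3)] dotp_3[OF assms(2,3)] by algebra

section \<open>The colouring\<close>

lemma first_diff:
  assumes "length x = length y" "x \<noteq> y"
  shows first_diff_less: "first_diff x y < length x"
    and nth_first_diff: "x ! first_diff x y \<noteq> y ! first_diff x y"
    and nth_less_first_diff: "j < first_diff x y \<Longrightarrow> x!j = y!j"
proof -
  have "\<exists>i. i < length x \<and> x!i \<noteq> y!i" using assms by (metis nth_equalityI)
  then have "first_diff x y < length x \<and> x ! first_diff x y \<noteq> y ! first_diff x y"
    unfolding first_diff_def by (rule LeastI_ex)
  then show "first_diff x y < length x" "x ! first_diff x y \<noteq> y ! first_diff x y" by auto
  show "x!j = y!j" if "j < first_diff x y"
    using not_less_Least[OF that[unfolded first_diff_def]] that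
      \<open>first_diff x y < length x \<and> _\<close> by auto
qed

lemma first_diff_commute: "length x = length y \<Longrightarrow> first_diff x y = first_diff y x"
  unfolding first_diff_def by (metis)

lemma lex_less_iff_nth:
  assumes "i < length x" "\<forall>j<i. x!j = y!j" "x!i \<noteq> y!i"
  shows "lex_less r x y \<longleftrightarrow> (x!i, y!i) \<in> r"
proof
  assume "lex_less r x y"
  then obtain i' where i': "i' < length x" "\<forall>j<i'. x!j = y!j" "x!i' \<noteq> y!i'" "(x!i', y!i') \<in> r"
    unfolding lex_less_def by blast
  have "i' = i" using i' assms by (metis linorder_neqE_nat)
  then show "(x!i, y!i) \<in> r" using i' by simp
next
  assume "(x!i, y!i) \<in> r"
  then show "lex_less r x y" using assms unfolding lex_less_def by blast
qed

lemma lex_less_iff_nth_0: "x \<noteq> [] \<Longrightarrow> x!0 \<noteq> y!0 \<Longrightarrow> lex_less r x y \<longleftrightarrow> (x!0, y!0) \<in> r"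
  by (simp add: lex_less_iff_nth)

lemma phi_commute:
  assumes lin: "linear_order_on {x. x \<noteq> 0} r" and "x \<in> vecs d" "y \<in> vecs d"
  shows "phi r x y = phi r y x"
proof (cases "x = y")
  case False
  define i where "i = first_diff x y"
  have len: "length x = d" "length y = d" using assms vecs_length by auto
  have i: "i < d" "x!i \<noteq> y!i" "\<forall>j<i. x!j = y!j"
    using first_diff[of x y] len False unfolding i_def by auto
  have "lex_less r x y \<longleftrightarrow> (x!i, y!i) \<in> r" "lex_less r y x \<longleftrightarrow> (y!i, x!i) \<in> r"
    using lex_less_iff_nth[of i x y] lex_less_iff_nth[of i y x] i len by auto
  moreover have "x!i \<noteq> 0" "y!i \<noteq> 0" using assms(2,3) i(1) vecs_nth_nonzero by auto
  then have "(x!i, y!i) \<in> r \<longleftrightarrow> (y!i, x!i) \<notin> r"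
    using lin i(2) unfolding linear_order_on_def partial_order_on_def total_on_def antisym_def
    by auto
  ultimately show ?thesis unfolding phi_def by auto
qed simp

fun color_coord :: "'a color \<Rightarrow> (nat \<times> 'a) option" where
  "color_coord (Dot p) = None"
| "color_coord (Zero k s) = Some (k - 1, s)"
| "color_coord (Up k s) = Some (k - 1, s)"
| "color_coord (Down k s) = Some (k - 1, s)"

lemma color_cases:
  obtains p where "g = Dot p" | i s where "color_coord g = Some (i, s)"
  by (cases g) auto

lemma col_coord: "color_coord (col x y) = Some (i, s) \<Longrightarrow> i = first_diff x y \<and> s = x!i + y!i"
  by (auto simp: col_def Let_def split: if_splits)

lemma phi_coord:
  assumes "x \<in> vecs d" "y \<in> vecs d" "x \<noteq> y" "color_coord (phi r x y) = Some (i, s)"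
  shows "i < d" "\<forall>j<i. x!j = y!j" "x!i \<noteq> y!i" "s = x!i + y!i"
proof -
  have len: "length x = d" "length y = d" using assms(1,2) vecs_length by auto
  have "i = first_diff x y \<and> s = x!i + y!i"
    using assms(4) col_coord[of x y] col_coord[of y x] first_diff_commute[of x y] len
    unfolding phi_def by (auto split: if_splits simp: add.commute)
  then show "i < d" "\<forall>j<i. x!j = y!j" "x!i \<noteq> y!i" "s = x!i + y!i"
    using first_diff[of x y] len assms(3) by auto
qed

lemma phi_coord_agree:
  assumes "x \<in> vecs d" "y \<in> vecs d" "z \<in> vecs d" "x \<noteq> y" "x \<noteq> z"
    and "phi r x y = g" "phi r x z = g" "color_coord g = Some (i, s)" "j \<le> i"
  shows "y!j = z!j"
proof -
  have "color_coord (phi r x y) = Some (i, s)" "color_coord (phi r x z) = Some (i, s)"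
    using assms(6-8) by simp_all
  note y = phi_coord[OF assms(1,2,4) this(1)] and z = phi_coord[OF assms(1,3,5) this(2)]
  show ?thesis
  proof (cases "j = i")
    case True
    then show ?thesis using y(4) z(4) by simp
  next
    case False
    then show ?thesis using y(2) z(2) assms(9) by simp
  qed
qed

lemma phi_eq_Dot: "phi r x y = Dot p \<Longrightarrow> dotp x y = p \<and> p \<noteq> 0 \<and> p \<noteq> dotp x x \<and> p \<noteq> dotp y y"
  by (auto simp: phi_def col_def Let_def dotp_commute[of y x] split: if_splits)

text \<open>The value of \<open>x \<bullet> y\<close> forced by the colour \<open>g\<close> of \<open>{x, y}\<close>, where \<open>L\<close> says whether
  \<open>x\<close> is the lexicographically smaller vertex and \<open>xx = x \<bullet> x\<close>, \<open>yy = y \<bullet> y\<close>.\<close>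
fun color_dotp :: "'a color \<Rightarrow> bool \<Rightarrow> 'a \<Rightarrow> 'a \<Rightarrow> 'a::zero" where
  "color_dotp (Dot p) L xx yy = p"
| "color_dotp (Zero k s) L xx yy = 0"
| "color_dotp (Up k s) L xx yy = (if L then xx else yy)"
| "color_dotp (Down k s) L xx yy = (if L then yy else xx)"

lemma phi_dotp: "dotp x y = color_dotp (phi r x y) (lex_less r x y) (dotp x x) (dotp y y)"
  by (auto simp: phi_def col_def Let_def dotp_commute[of y x])

lemma phi_dotp_nth_0:
  "x \<noteq> [] \<Longrightarrow> x!0 \<noteq> y!0 \<Longrightarrow>
    dotp x y = color_dotp (phi r x y) ((x!0, y!0) \<in> r) (dotp x x) (dotp y y)"
  using phi_dotp[of x y r] lex_less_iff_nth_0[of x y r] by simp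

section \<open>Monochromatic configurations over a cherry\<close>

lemma cherry_not_parallel:
  fixes a b c :: "'a::field list"
  assumes "a \<in> vecs 3" "b \<in> vecs 3" "c \<in> vecs 3" "a \<noteq> b" "a \<noteq> c" "b \<noteq> c"
    and cherry: "phi r c a = phi r c b"
  shows "\<not> parallel (vdiff a c) (vdiff b c)"
proof
  assume par: "parallel (vdiff a c) (vdiff b c)"
  have len: "length a = 3" "length b = 3" "length c = 3" using assms(1-3) vecs_length by auto
  have "vdiff a c = vdiff b c"
  proof (cases "phi r c a" rule: color_cases)
    case (1 p)
    then have "dotp c a = p" "dotp c b = p" "p \<noteq> dotp c c" using cherry phi_eq_Dot by metis+
    then show ?thesis
      using parallel_eq_if_dotp_eq[OF _ _ _ par, of c] len by (simp add: dotp_vdiff_right)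
  next
    case (2 i s)
    note ca = phi_coord[OF assms(3,1) assms(5)[symmetric] 2]
      and cb = phi_coord[OF assms(3,2) assms(6)[symmetric] 2[unfolded cherry]]
    have "vdiff a c ! i = vdiff b c ! i" "vdiff a c ! i \<noteq> 0" using ca cb len by auto
    then show ?thesis using parallel_eq_if_nth_eq[OF _ _ par ca(1)] len by simp
  qed
  then show False using vdiff_right_cancel len assms(4) by metis
qed

lemma coord_star_over_cherry:
  fixes a b c x :: "'a::field list"
  assumes vecs: "a \<in> vecs 3" "b \<in> vecs 3" "c \<in> vecs 3" "x \<in> vecs 3"
    and "x \<noteq> a" "x \<noteq> b" "x \<noteq> c" and nonpar: "\<not> parallel (vdiff a c) (vdiff b c)"
    and "phi r x a = g" "phi r x b = g" "phi r x c = g" "color_coord g = Some (i, s)"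
  shows "i = 0" "a!0 = c!0" "b!0 = c!0" "x!0 \<noteq> c!0" "s = x!0 + c!0"
proof -
  have len: "length a = 3" "length b = 3" "length c = 3" using vecs vecs_length by auto
  have agree: "a!j = c!j \<and> b!j = c!j" if "j \<le> i" for j
    using phi_coord_agree[OF vecs(4,1,3), of r g i s j] phi_coord_agree[OF vecs(4,2,3), of r g i s j]
      assms(5-) that by auto
  show "i = 0"
  proof (rule ccontr)
    assume "i \<noteq> 0"
    then have "a!0 = c!0" "b!0 = c!0" "a!1 = c!1" "b!1 = c!1" using agree by auto
    then have "parallel (vdiff a c) (vdiff b c)" using len by (simp add: parallel_def)
    with nonpar show False by contradiction
  qed
  then show "a!0 = c!0" "b!0 = c!0" using agree by auto
  show "x!0 \<noteq> c!0" "s = x!0 + c!0"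
    using phi_coord[OF vecs(4,3) assms(7), of r i s] assms(11,12) \<open>i = 0\<close> by auto
qed

lemma phi_Dot_orthogonal:
  fixes x a c :: "'a::field list"
  assumes "length x = 3" "length a = 3" "length c = 3" "phi r x a = Dot p" "phi r x c = Dot p"
  shows "dotp x (vdiff a c) = 0"
  using assms phi_eq_Dot[of r x a p] phi_eq_Dot[of r x c p] by (simp add: dotp_vdiff_right)

lemma no_Dot_mono_K23_over_cherry:
  fixes a b c x y :: "'a::field list"
  assumes vecs: "a \<in> vecs 3" "b \<in> vecs 3" "c \<in> vecs 3" "x \<in> vecs 3" "y \<in> vecs 3"
    and "x \<noteq> y" and nonpar: "\<not> parallel (vdiff a c) (vdiff b c)"
    and mono: "\<And>v w. v \<in> {x, y} \<Longrightarrow> w \<in> {a, b, c} \<Longrightarrow> phi r v w = Dot p"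
  shows False
proof -
  have len: "length a = 3" "length b = 3" "length c = 3" "length x = 3" "length y = 3"
    using vecs vecs_length by auto
  have dot: "dotp v w = p" if "v \<in> {x, y}" "w \<in> {a, b, c}" for v w
    using phi_eq_Dot mono[OF that] by metis
  then have "parallel x y"
    using orthogonal_to_nonparallel_parallel[OF _ _ len(4,5) nonpar] len
    by (simp add: dotp_vdiff_eq_0_iff)
  moreover have "dotp c x = dotp c y" "dotp c x \<noteq> 0"
    using dot[of x c] dot[of y c] phi_eq_Dot[of r x c p] mono by (simp_all add: dotp_commute)
  ultimately show False using parallel_eq_if_dotp_eq len \<open>x \<noteq> y\<close> by metis
qed

text \<open>Here all six edges lie in the first-coordinate class, so \<open>x\<close> and \<open>y\<close> are compared
  with \<open>a, b, c\<close> in the same direction, and the dot products \<open>v \<bullet> w\<close> depend either on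
  \<open>v\<close> alone or on \<open>w\<close> alone.\<close>
lemma no_coord_mono_K23_over_cherry:
  fixes a b c x y :: "'a::field list"
  assumes vecs: "a \<in> vecs 3" "b \<in> vecs 3" "c \<in> vecs 3" "x \<in> vecs 3" "y \<in> vecs 3"
    and dist: "x \<noteq> y" "x \<notin> {a, b, c}" "y \<notin> {a, b, c}"
    and nonpar: "\<not> parallel (vdiff a c) (vdiff b c)"
    and mono: "\<And>v w. v \<in> {x, y} \<Longrightarrow> w \<in> {a, b, c} \<Longrightarrow> phi r v w = g"
    and coord: "color_coord g = Some (i, s)"
  shows False
proof -
  have len: "length a = 3" "length b = 3" "length c = 3" "length x = 3" "length y = 3"
    using vecs vecs_length by auto
  have x0: "a!0 = c!0" "b!0 = c!0" "x!0 \<noteq> c!0" "s = x!0 + c!0"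
    using coord_star_over_cherry[OF vecs(1-4), of r g i s] dist nonpar mono coord by auto
  moreover have "s = y!0 + c!0"
    using coord_star_over_cherry[OF vecs(1-3,5), of r g i s] dist nonpar mono coord by auto
  ultimately have y0: "y!0 = x!0" by simp
  have dot: "dotp v w = color_dotp g ((x!0, c!0) \<in> r) (dotp v v) (dotp w w)"
    if "v \<in> {x, y}" "w \<in> {a, b, c}" for v w
  proof -
    have "v \<noteq> []" "v!0 = x!0" "w!0 = c!0" using that len x0 y0 by auto
    then show ?thesis using phi_dotp_nth_0[of v w r] mono[OF that] x0(3) by simp
  qed
  have "(dotp x a = dotp x c \<and> dotp x b = dotp x c) \<or> (\<forall>w \<in> {a, b, c}. dotp x w = dotp y w)"
    using dot[of x a] dot[of x b] dot[of x c] dot[of y a] dot[of y b] dot[of y c] coord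
    by (cases g; cases "(x!0, c!0) \<in> r") auto
  moreover have u0: "vdiff a c ! 0 = 0" "vdiff b c ! 0 = 0" using x0 len by simp_all
  ultimately consider "dotp x (vdiff a c) = 0" "dotp x (vdiff b c) = 0"
    | "dotp (vdiff x y) (vdiff a c) = 0" "dotp (vdiff x y) (vdiff b c) = 0"
    using len by (auto simp: dotp_vdiff_right dotp_vdiff_left)
  then show False
  proof cases
    case 1
    then have "x!1 = 0" using orthogonal_to_nonparallel_first_coord_zero[OF _ _ len(4) nonpar u0] len
      by simp
    then show False using vecs(4) vecs_nth_nonzero by fastforce
  next
    case 2
    then have "vdiff x y ! 1 = 0 \<and> vdiff x y ! 2 = 0"
      using orthogonal_to_nonparallel_first_coord_zero[OF _ _ _ nonpar u0] len by simp
    then have "x = y" using len y0 by (simp add: list_3_eqI)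
    with dist(1) show False by contradiction
  qed
qed

lemma no_mono_K23_over_cherry:
  fixes a b c x y :: "'a::field list"
  assumes "a \<in> vecs 3" "b \<in> vecs 3" "c \<in> vecs 3" "x \<in> vecs 3" "y \<in> vecs 3"
    and "x \<noteq> y" "x \<notin> {a, b, c}" "y \<notin> {a, b, c}"
    and "\<not> parallel (vdiff a c) (vdiff b c)"
    and "\<And>v w. v \<in> {x, y} \<Longrightarrow> w \<in> {a, b, c} \<Longrightarrow> phi r v w = g"
  shows False
proof (cases g rule: color_cases)
  case (1 p)
  then show False using no_Dot_mono_K23_over_cherry[OF assms(1-6,9)] assms(10) by blast
next
  case (2 i s)
  then show False using no_coord_mono_K23_over_cherry[OF assms(1-10)] by blast
qed

lemma no_coord_star_and_Dot_star_over_cherry: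
  fixes a b c x y :: "'a::field list"
  assumes vecs: "a \<in> vecs 3" "b \<in> vecs 3" "c \<in> vecs 3" "x \<in> vecs 3" "y \<in> vecs 3"
    and "x \<notin> {a, b, c}" and nonpar: "\<not> parallel (vdiff a c) (vdiff b c)"
    and star_x: "\<And>w. w \<in> {a, b, c} \<Longrightarrow> phi r x w = g" and "color_coord g = Some (i, s)"
    and star_y: "\<And>w. w \<in> {a, b, c} \<Longrightarrow> phi r y w = Dot p"
  shows False
proof -
  have len: "length a = 3" "length b = 3" "length c = 3" "length y = 3"
    using vecs vecs_length by auto
  have "vdiff a c ! 0 = 0" "vdiff b c ! 0 = 0"
    using coord_star_over_cherry[OF vecs(1-4), of r g i s] assms(6-9) len by auto
  moreover have "dotp y (vdiff a c) = 0" "dotp y (vdiff b c) = 0"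
    using phi_Dot_orthogonal[of y _ c r p] star_y len by auto
  ultimately have "y!1 = 0"
    using orthogonal_to_nonparallel_first_coord_zero[OF _ _ len(4) nonpar] len by simp
  then show False using vecs(5) vecs_nth_nonzero by fastforce
qed

lemma no_nested_Dot_stars_over_cherry:
  fixes a b c d e :: "'a::field list"
  assumes vecs: "a \<in> vecs 3" "b \<in> vecs 3" "c \<in> vecs 3" "d \<in> vecs 3" "e \<in> vecs 3"
    and nonpar: "\<not> parallel (vdiff a c) (vdiff b c)"
    and star_d: "\<And>w. w \<in> {a, b, c} \<Longrightarrow> phi r d w = Dot p"
    and star_e: "\<And>w. w \<in> {a, b, c, d} \<Longrightarrow> phi r e w = Dot q"
  shows False
proof -
  have len: "length a = 3" "length b = 3" "length c = 3" "length d = 3" "length e = 3"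
    using vecs vecs_length by auto
  have "dotp d (vdiff a c) = 0" "dotp d (vdiff b c) = 0"
    using phi_Dot_orthogonal[of d _ c r p] star_d len by auto
  moreover have "dotp e (vdiff a c) = 0" "dotp e (vdiff b c) = 0"
    using phi_Dot_orthogonal[of e _ c r q] star_e len by auto
  ultimately have "parallel d e"
    using orthogonal_to_nonparallel_parallel[OF _ _ len(4,5) nonpar] len by simp
  moreover have "dotp e (vdiff a d) = 0"
    using phi_Dot_orthogonal[of e a d r q] star_e len by auto
  ultimately have "dotp d a = dotp d d"
    using parallel_orthogonal[of d e "vdiff a d"] vecs_nth_nonzero[OF vecs(5)] len
    by (simp add: dotp_vdiff_eq_0_iff)
  then show False using phi_eq_Dot[of r d a p] star_d by simp
qed

lemma no_nested_mono_stars_over_cherry: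
  fixes a b c d e :: "'a::field list"
  assumes vecs: "a \<in> vecs 3" "b \<in> vecs 3" "c \<in> vecs 3" "d \<in> vecs 3" "e \<in> vecs 3"
    and dist: "d \<notin> {a, b, c}" "e \<notin> {a, b, c, d}"
    and nonpar: "\<not> parallel (vdiff a c) (vdiff b c)"
    and star_d: "\<And>w. w \<in> {a, b, c} \<Longrightarrow> phi r d w = g"
    and star_e: "\<And>w. w \<in> {a, b, c, d} \<Longrightarrow> phi r e w = h"
  shows False
proof -
  note no_mixed = no_coord_star_and_Dot_star_over_cherry[OF vecs(1-3) _ _ _ nonpar]
  show False
  proof (cases g rule: color_cases)
    case (1 p)
    show False
    proof (cases h rule: color_cases)
      case (1 q)
      then show False
        using no_nested_Dot_stars_over_cherry[OF vecs nonpar] star_d star_e \<open>g = Dot p\<close> by blast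
    next
      case (2 j t)
      then show False using no_mixed[OF vecs(5,4), of r h j t p] dist star_d star_e \<open>g = Dot p\<close> by auto
    qed
  next
    case (2 i s)
    show False
    proof (cases h rule: color_cases)
      case (1 q)
      then show False using no_mixed[OF vecs(4,5), of r g i s q] dist star_d star_e 2 by auto
    next
      case (2 j t)
      have "a!0 = d!0"
        using phi_coord_agree[OF vecs(5,1,4), of r h j t 0] star_e dist 2 by auto
      moreover have "d!0 \<noteq> c!0" "a!0 = c!0"
        using coord_star_over_cherry[OF vecs(1-4), of r g i s] dist nonpar star_d \<open>color_coord g = _\<close>
        by auto
      ultimately show False by simp
    qed
  qed
qed

section \<open>Leftover structures\<close>

lemma leftover_cherry:
  assumes "leftover r T" "T \<subseteq> vecs d" and lin: "linear_order_on {x. x \<noteq> 0} r"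
    and "x \<in> T" "y \<in> T" "z \<in> T" "x \<noteq> y" "x \<noteq> z" "y \<noteq> z"
  shows "phi r x y = phi r x z \<or> phi r y x = phi r y z \<or> phi r z x = phi r z y"
  using assms(1,2,4-)
proof (induction arbitrary: x y z rule: leftover.induct)
  case (single x)
  then show ?case by auto
next
  case (split A B \<gamma>)
  have sub: "A \<subseteq> vecs d" "B \<subseteq> vecs d" using split.prems(1) by auto
  have cross: "phi r u w = \<gamma>" if "u \<in> A \<union> B" "w \<in> A \<union> B" "(u \<in> A) \<noteq> (w \<in> A)" for u w
  proof (cases "u \<in> A")
    case True
    then show ?thesis using that split.hyps(7) by auto
  next
    case False
    then have "phi r u w = phi r w u" using that sub phi_commute[OF lin] by blast
    then show ?thesis using False that split.hyps(7) by auto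
  qed
  note mem = split.prems(2-4) and dist = split.prems(5-7)
  show ?case
  proof (cases "(x \<in> A) = (y \<in> A)")
    case xy: True
    show ?thesis
    proof (cases "(z \<in> A) = (x \<in> A)")
      case True
      then consider "{x, y, z} \<subseteq> A" | "{x, y, z} \<subseteq> B" using xy mem by blast
      then show ?thesis
        using split.IH(1)[OF sub(1), of x y z] split.IH(2)[OF sub(2), of x y z] dist
        by cases simp_all
    next
      case False
      then show ?thesis using cross[of z x] cross[of z y] xy mem by simp
    qed
  next
    case False
    then show ?thesis using cross[of x y] cross[of x z] cross[of y x] cross[of y z] mem by metis
  qed
qed

lemma leftover_obtain_cherry:
  fixes T :: "'a::field list set"
  assumes "leftover r T" "T \<subseteq> vecs 3" "linear_order_on {x. x \<noteq> 0} r" "3 \<le> card T"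
  obtains a b c where "a \<in> T" "b \<in> T" "c \<in> T" "\<not> parallel (vdiff a c) (vdiff b c)"
proof -
  obtain x y z where xyz: "{x, y, z} \<subseteq> T" "x \<noteq> y" "y \<noteq> z" "x \<noteq> z"
    using obtain_subset_with_card_n[OF assms(4)] by (metis card_3_iff)
  then have vecs: "x \<in> vecs 3" "y \<in> vecs 3" "z \<in> vecs 3" using assms(2) by auto
  from leftover_cherry[OF assms(1-3), of x y z] xyz
  consider "phi r x y = phi r x z" | "phi r y x = phi r y z" | "phi r z x = phi r z y" by auto
  then show thesis
  proof cases
    case 1
    then show thesis using that[of y z x] cherry_not_parallel[OF vecs(2,3,1)] xyz by auto
  next
    case 2
    then show thesis using that[of x z y] cherry_not_parallel[OF vecs(1,3,2)] xyz by auto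
  next
    case 3
    then show thesis using that[of x y z] cherry_not_parallel[OF vecs(1,2,3)] xyz by auto
  qed
qed

lemma leftover_split:
  assumes "leftover r S" "2 \<le> card S" "S \<subseteq> vecs d" and lin: "linear_order_on {x. x \<noteq> 0} r"
  obtains A B \<gamma> where "S = A \<union> B" "A \<inter> B = {}" "1 \<le> card A" "card A \<le> card B"
    "leftover r B" "\<And>a b. a \<in> A \<Longrightarrow> b \<in> B \<Longrightarrow> phi r a b = \<gamma>"
  using assms(1)
proof cases
  case (single x)
  then show thesis using assms(2) by simp
next
  case (split A B \<gamma>)
  have "finite A" "finite B"
    using assms(2) split(1) by (metis card.infinite finite_Un not_numeral_le_zero)+
  then have card: "1 \<le> card A" "1 \<le> card B" using split(2,3) by (simp_all add: Suc_leI card_gt_0_iff)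
  have mono: "phi r a b = \<gamma>" "phi r b a = \<gamma>" if "a \<in> A" "b \<in> B" for a b
    using that split(1,8) assms(3) phi_commute[OF lin] by (metis UnI1 UnI2 subsetD)+
  show thesis
  proof (cases "card A \<le> card B")
    case True
    then show thesis using that[of A B \<gamma>] split card mono by blast
  next
    case False
    then show thesis using that[of B A \<gamma>] split card mono by (auto simp: Un_commute)
  qed
qed

lemma no_mono_K23_over_leftover:
  fixes B :: "'a::field list set"
  assumes lin: "linear_order_on {x. x \<noteq> 0} r"
    and B: "leftover r B" "B \<subseteq> vecs 3" "3 \<le> card B"
    and A: "A \<subseteq> vecs 3" "2 \<le> card A" "A \<inter> B = {}"
    and mono: "\<And>x w. x \<in> A \<Longrightarrow> w \<in> B \<Longrightarrow> phi r x w = \<gamma>"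
  shows False
proof -
  obtain a b c where abc: "a \<in> B" "b \<in> B" "c \<in> B" "\<not> parallel (vdiff a c) (vdiff b c)"
    using leftover_obtain_cherry[OF B(1,2) lin B(3)] by blast
  obtain x y where xy: "x \<in> A" "y \<in> A" "x \<noteq> y"
    using obtain_subset_with_card_n[OF A(2)] by (metis card_2_iff insert_subset)
  show False
    using no_mono_K23_over_cherry[of a b c x y, OF _ _ _ _ _ xy(3) _ _ abc(4)] abc xy A B(2) mono
    by blast
qed

lemma no_nested_mono_stars_over_leftover:
  fixes B :: "'a::field list set"
  assumes lin: "linear_order_on {x. x \<noteq> 0} r"
    and B: "leftover r B" "B \<subseteq> vecs 3" "3 \<le> card B"
    and "d \<in> vecs 3" "e \<in> vecs 3" "d \<notin> B" "e \<notin> insert d B"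
    and "\<And>w. w \<in> B \<Longrightarrow> phi r d w = \<gamma>" "\<And>w. w \<in> insert d B \<Longrightarrow> phi r e w = \<delta>"
  shows False
proof -
  obtain a b c where abc: "a \<in> B" "b \<in> B" "c \<in> B" "\<not> parallel (vdiff a c) (vdiff b c)"
    using leftover_obtain_cherry[OF B(1,2) lin B(3)] by blast
  show False
    using no_nested_mono_stars_over_cherry[of a b c d e, OF _ _ _ _ _ _ _ abc(4)] abc assms(4-) B(2)
    by blast
qed

lemma leftover_split_off_vertex:
  fixes S :: "'a::field list set"
  assumes S: "leftover r S" "S \<subseteq> vecs 3" "5 \<le> card S" and lin: "linear_order_on {x. x \<noteq> 0} r"
  obtains e B \<gamma> where "S = insert e B" "e \<notin> B" "leftover r B" "\<And>w. w \<in> B \<Longrightarrow> phi r e w = \<gamma>"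
proof -
  have "2 \<le> card S" using S(3) by simp
  then obtain A B \<gamma> where split: "S = A \<union> B" "A \<inter> B = {}" "1 \<le> card A" "card A \<le> card B"
    "leftover r B" and mono: "\<And>a b. a \<in> A \<Longrightarrow> b \<in> B \<Longrightarrow> phi r a b = \<gamma>"
    using leftover_split[OF S(1) _ S(2) lin] by blast
  have "card A = 1"
  proof (rule ccontr)
    assume "card A \<noteq> 1"
    have "card A + card B = card S"
      using S(3) split(1,2) by (metis card.infinite card_Un_disjoint finite_Un not_numeral_le_zero)
    then show False
      using no_mono_K23_over_leftover[OF lin split(5) _ _ _ _ split(2) mono] split S \<open>card A \<noteq> 1\<close>
      by auto
  qed
  then obtain e where "A = {e}" by (rule card_1_singletonE)
  then show thesis using that[of e B \<gamma>] split mono by auto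
qed

theorem corollary3p12:
  fixes r :: "('a::{finite,field}) rel" and S :: "'a list set"
  assumes "odd (card (UNIV :: 'a set))"
    and "linear_order_on {x. x \<noteq> 0} r"
    and "S \<subseteq> vecs 3"
    and "card S = 6"
  shows "\<not> leftover r S"
proof
  note lin = assms(2)
  have "finite S" "5 \<le> card S" using assms(4) card.infinite by force+
  moreover assume "leftover r S"
  ultimately obtain e B \<gamma> where S: "S = insert e B" "e \<notin> B" "leftover r B"
    and star_e: "\<And>w. w \<in> B \<Longrightarrow> phi r e w = \<gamma>"
    using leftover_split_off_vertex[OF _ assms(3) _ lin] by blast
  have B: "finite B" "card B = 5" "B \<subseteq> vecs 3"
    using S(1,2) assms(3,4) \<open>finite S\<close> by auto
  then obtain d C \<delta> where C: "B = insert d C" "d \<notin> C" "leftover r C"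
    and star_d: "\<And>w. w \<in> C \<Longrightarrow> phi r d w = \<delta>"
    using leftover_split_off_vertex[OF S(3) _ _ lin] by (metis order_refl)
  have "card C = 4" using B(1,2) C(1,2) by auto
  show False
  proof (rule no_nested_mono_stars_over_leftover[OF lin C(3) _ _ _ _ _ _ star_d])
    show "phi r e w = \<gamma>" if "w \<in> insert d C" for w using star_e C(1) that by blast
  qed (use S B C \<open>card C = 4\<close> assms(3) in auto)
qed

end
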